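(* The game operator $F$ is Lipschitz continuous: there is a constant $\gamma$ with $\|F(Z)-F(Z')\|_*\le\gamma\|Z-Z'\|$ for all joint states $Z,Z'$. Specifically, with $d=n+m$: for the Frobenius norm pair ($\|\cdot\|=\|\cdot\|_*=\|\cdot\|_F$) one may take $\gamma=O(2^d)$, and for the pair $\|\cdot\|=\|\cdot\|_1$ (Schatten-1/trace norm), $\|\cdot\|_*=\|\cdot\|_\infty$ (operator norm) one may take $\gamma=O(1)$.
   Context: Alice's strategy set is $\mathcal{A}=\{\alpha\in\mathbb{C}^{2^n\times 2^n}:\alpha\succeq0,\ \operatorname{Tr}\alpha=1\}$ and Bob's is $\mathcal{B}=\{\beta\in\mathbb{C}^{2^m\times 2^m}:\beta\succeq0,\ \operatorname{Tr}\beta=1\}$; joint states are pairs $Z=(\alpha,\beta)$, identified with block-diagonal matrices $\mathrm{diag}(\alpha,\beta)$ for the purpose of norms. Given a POVM $\{P_\omega\}_{\omega\in\Omega}$ on $n+m$ qubits with finite $\Omega$ and a finite-valued utility $u:\Omega\to[-1,1]$, the payoff observable is $U=\sum_\omega u(\omega)P_\omega$, and $F(\alpha,\beta)=(\operatorname{Tr}_{\mathcal B}[U^\dagger(I_{2^n}\otimes\beta)],\ -\operatorname{Tr}_{\mathcal A}[U^\dagger(\alpha\otimes I_{2^m})])$, with $\operatorname{Tr}_{\mathcal A},\operatorname{Tr}_{\mathcal B}$ the partial traces over Alice's and Bob's subsystems. The $O(\cdot)$ bounds are in terms of $d$, uniformly over such games. *)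

theory Defs
  imports "Jordan_Normal_Form.Char_Poly"
begin

definition mtrace :: "complex mat \<Rightarrow> complex" where
  "mtrace A = (\<Sum>i<dim_row A. A $$ (i, i))"

definition madj :: "complex mat \<Rightarrow> complex mat" where
  "madj A = mat (dim_col A) (dim_row A) (\<lambda>(i, j). cnj (A $$ (j, i)))"

definition psd :: "nat \<Rightarrow> complex mat \<Rightarrow> bool" where
  "psd N A \<longleftrightarrow> A \<in> carrier_mat N N \<and> madj A = A \<and>
     (\<forall>v \<in> carrier_vec N. Im (map_vec cnj v \<bullet> (A *\<^sub>v v)) = 0 \<and>
                            0 \<le> Re (map_vec cnj v \<bullet> (A *\<^sub>v v)))"

definition density :: "nat \<Rightarrow> complex mat \<Rightarrow> bool" where
  "density N A \<longleftrightarrow> psd N A \<and> mtrace A = 1"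

definition kron :: "complex mat \<Rightarrow> complex mat \<Rightarrow> complex mat" where
  "kron A B = mat (dim_row A * dim_row B) (dim_col A * dim_col B)
     (\<lambda>(i, j). A $$ (i div dim_row B, j div dim_col B) * B $$ (i mod dim_row B, j mod dim_col B))"

text \<open>Partial traces on a bipartite system of dimensions a (first factor, Alice) and
  b (second factor, Bob); index i*b+k corresponds to basis vector e_i \<otimes> e_k.\<close>
definition ptrace_B :: "nat \<Rightarrow> nat \<Rightarrow> complex mat \<Rightarrow> complex mat" where
  "ptrace_B a b M = mat a a (\<lambda>(i, j). \<Sum>k<b. M $$ (i * b + k, j * b + k))"

definition ptrace_A :: "nat \<Rightarrow> nat \<Rightarrow> complex mat \<Rightarrow> complex mat" where
  "ptrace_A a b M = mat b b (\<lambda>(i, j). \<Sum>k<a. M $$ (k * b + i, k * b + j))"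

definition blockdiag :: "complex mat \<Rightarrow> complex mat \<Rightarrow> complex mat" where
  "blockdiag A B = four_block_mat A (0\<^sub>m (dim_row A) (dim_col B)) (0\<^sub>m (dim_row B) (dim_col A)) B"

definition frob_norm :: "complex mat \<Rightarrow> real" where
  "frob_norm A = sqrt (\<Sum>i<dim_row A. \<Sum>j<dim_col A. (cmod (A $$ (i, j)))\<^sup>2)"

definition cvec_norm :: "complex vec \<Rightarrow> real" where
  "cvec_norm v = sqrt (\<Sum>i<dim_vec v. (cmod (v $ i))\<^sup>2)"

definition op_norm :: "complex mat \<Rightarrow> real" where
  "op_norm A = Sup {cvec_norm (A *\<^sub>v v) | v. v \<in> carrier_vec (dim_col A) \<and> cvec_norm v \<le> 1}"

text \<open>Trace norm (Schatten-1 norm): sum of singular values, i.e. of the square roots of the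
  eigenvalues (with multiplicity) of A^* A.\<close>
definition trace_norm :: "complex mat \<Rightarrow> real" where
  "trace_norm A = sum_mset (image_mset (\<lambda>x. sqrt (Re x)) (proots (char_poly (madj A * A))))"

definition povm :: "nat \<Rightarrow> nat set \<Rightarrow> (nat \<Rightarrow> complex mat) \<Rightarrow> bool" where
  "povm N Omega P \<longleftrightarrow> finite Omega \<and> (\<forall>w\<in>Omega. psd N (P w)) \<and>
     (\<forall>i<N. \<forall>j<N. (\<Sum>w\<in>Omega. P w $$ (i, j)) = (1\<^sub>m N) $$ (i, j))"

definition payoff_obs :: "nat \<Rightarrow> nat set \<Rightarrow> (nat \<Rightarrow> complex mat) \<Rightarrow> (nat \<Rightarrow> real) \<Rightarrow> complex mat" where
  "payoff_obs N Omega P u = mat N N (\<lambda>(i, j). \<Sum>w\<in>Omega. complex_of_real (u w) * P w $$ (i, j))"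

definition game_F :: "nat \<Rightarrow> nat \<Rightarrow> complex mat \<Rightarrow> complex mat \<Rightarrow> complex mat \<Rightarrow> complex mat \<times> complex mat" where
  "game_F n m U \<alpha> \<beta> =
     (ptrace_B (2^n) (2^m) (madj U * kron (1\<^sub>m (2^n)) \<beta>),
      - ptrace_A (2^n) (2^m) (madj U * kron \<alpha> (1\<^sub>m (2^m))))"

end

theory Submission
  imports Defs "Jordan_Normal_Form.Schur_Decomposition" "HOL-Analysis.Convex"
begin

text \<open>F is linear in the joint state: the block-diagonal matrix formed from F(Z) - F(Z') is
  G(Z - Z') for the linear map G(A, B) = diag(M(B), -M'(A)), where M(B) = Tr_B[U^* (I (x) B)]
  and M' is the same map for the game with the two players swapped. Everything rests on the
  bound |<x, U z>| \<le> |x| |z| for the payoff observable: for each POVM element, |<x, P_w z>| is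
  at most the mean of <x, P_w x> and <z, P_w z>; summing with |u(w)| \<le> 1 and using that the P_w
  sum to the identity gives (|x|^2 + |z|^2) / 2, and rescaling x and z in opposite directions
  turns this into |x| |z|.

  Frobenius norms: the entries of U have modulus at most 1, so every entry of M(B) is at most
  the sum of the moduli of the entries of B, which by Cauchy-Schwarz is at most 2^m |B|_F;
  summing squares over the 2^n by 2^n entries gives the factor 2^(n+m).

  Trace and operator norms: by the spectral theorem the Hermitian matrix diag(A, B) is the sum
  of the lam_r w_r w_r^*, and its trace norm is the sum of the |lam_r|. The contribution of
  w_r w_r^* to <y, M(B) v> is the compression <v (x) w_r, U (y (x) w_r)> of U to product
  vectors, of modulus at most |y| |v|. So each block of G(A, B) has operator norm at most the
  trace norm of diag(A, B), and G(A, B) at most twice that.\<close>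

section \<open>Sesquilinear forms on coordinate vectors\<close>

lemma sum_lessThan_add: "(\<Sum>i<a + (b::nat). f i) = (\<Sum>i<a. f i) + (\<Sum>i<b. f (a + i))"
  by (induction b) (simp_all add: add.assoc)

text \<open>Vectors are coordinate functions, with the dimension passed as an explicit argument;
  coordinates beyond it are ignored.\<close>
definition sq_norm :: "nat \<Rightarrow> (nat \<Rightarrow> complex) \<Rightarrow> real" where
  "sq_norm N x = (\<Sum>i<N. (cmod (x i))\<^sup>2)"

definition sesq :: "nat \<Rightarrow> nat \<Rightarrow> complex mat \<Rightarrow> (nat \<Rightarrow> complex) \<Rightarrow> (nat \<Rightarrow> complex) \<Rightarrow> complex" where
  "sesq r c A x z = (\<Sum>i<r. \<Sum>j<c. cnj (x i) * A $$ (i, j) * z j)"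

definition form_bounded :: "nat \<Rightarrow> nat \<Rightarrow> complex mat \<Rightarrow> real \<Rightarrow> bool" where
  "form_bounded r c A K \<longleftrightarrow>
     (\<forall>x z. cmod (sesq r c A x z) \<le> K * (sqrt (sq_norm r x) * sqrt (sq_norm c z)))"

lemma sq_norm_nonneg: "0 \<le> sq_norm N x"
  unfolding sq_norm_def by (simp add: sum_nonneg)

lemma sq_norm_eq_0_iff: "sq_norm N x = 0 \<longleftrightarrow> (\<forall>i<N. x i = 0)"
  unfolding sq_norm_def by (subst sum_nonneg_eq_0_iff) auto

lemma sq_norm_scale: "sq_norm N (\<lambda>i. c * x i) = (cmod c)\<^sup>2 * sq_norm N x"
  unfolding sq_norm_def by (simp add: sum_distrib_left norm_mult power_mult_distrib)

lemma sq_norm_add_dim: "sq_norm (a + b) x = sq_norm a x + sq_norm b (\<lambda>i. x (a + i))"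
  unfolding sq_norm_def by (rule sum_lessThan_add)

lemma sq_norm_cong: "(\<And>i. i < N \<Longrightarrow> x i = x' i) \<Longrightarrow> sq_norm N x = sq_norm N x'"
  unfolding sq_norm_def by simp

lemma sesq_cong:
  "(\<And>i. i < r \<Longrightarrow> x i = x' i) \<Longrightarrow> (\<And>j. j < c \<Longrightarrow> z j = z' j) \<Longrightarrow> sesq r c A x z = sesq r c A x' z'"
  unfolding sesq_def by simp

lemma sesq_eq_0_if_sq_norm_eq_0:
  "sq_norm r x = 0 \<or> sq_norm c z = 0 \<Longrightarrow> sesq r c A x z = 0"
  unfolding sesq_def sq_norm_eq_0_iff by auto

lemma sesq_rescale:
  assumes "t \<noteq> 0"
  shows "sesq r c A (\<lambda>i. of_real t * x i) (\<lambda>j. inverse (of_real t) * z j) = sesq r c A x z"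
  unfolding sesq_def using assms by (intro sum.cong refl) (simp add: mult.assoc mult.left_commute)

text \<open>Rescaling x by t and z by 1/t, with t squared equal to |z|/|x|, turns the arithmetic
  mean of the squared norms into the product of the norms.\<close>
lemma form_bounded_of_half_sum:
  assumes half: "\<And>x z. cmod (sesq r c A x z) \<le> (sq_norm r x + sq_norm c z) / 2"
  shows "form_bounded r c A 1"
  unfolding form_bounded_def
proof (intro allI)
  fix x z :: "nat \<Rightarrow> complex"
  define X Z where "X = sqrt (sq_norm r x)" and "Z = sqrt (sq_norm c z)"
  show "cmod (sesq r c A x z) \<le> 1 * (X * Z)"
  proof (cases "X = 0 \<or> Z = 0")
    case True
    then show ?thesis by (auto simp: X_def Z_def sesq_eq_0_if_sq_norm_eq_0)
  next
    case False
    then have "X > 0" "Z > 0" by (auto simp: X_def Z_def sq_norm_nonneg less_le)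
    define t where "t = sqrt (Z / X)"
    have "t > 0" and tt: "t * t = Z / X" using \<open>X > 0\<close> \<open>Z > 0\<close> by (auto simp: t_def)
    have "cmod (sesq r c A x z) =
        cmod (sesq r c A (\<lambda>i. of_real t * x i) (\<lambda>j. inverse (of_real t) * z j))"
      using \<open>t > 0\<close> by (simp add: sesq_rescale)
    also have "\<dots> \<le> (t\<^sup>2 * X\<^sup>2 + (inverse t)\<^sup>2 * Z\<^sup>2) / 2"
      using half[of "\<lambda>i. of_real t * x i" "\<lambda>j. inverse (of_real t) * z j"] \<open>t > 0\<close>
      unfolding sq_norm_scale X_def Z_def by (simp add: sq_norm_nonneg norm_inverse)
    also have "\<dots> = X * Z"
      using \<open>X > 0\<close> \<open>Z > 0\<close> by (simp add: power2_eq_square tt field_simps)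
    finally show ?thesis by simp
  qed
qed

lemma form_bounded_entry:
  assumes bnd: "form_bounded r c A K" and "p < r" "q < c"
  shows "cmod (A $$ (p, q)) \<le> K"
proof -
  define e :: "nat \<Rightarrow> nat \<Rightarrow> complex" where "e t i = (if i = t then 1 else 0)" for t i
  have "sesq r c A (e p) (e q) = A $$ (p, q)"
    using \<open>p < r\<close> \<open>q < c\<close> unfolding sesq_def e_def
    by (simp add: if_distrib[of cnj] if_distrib[of "\<lambda>x. x * _"] if_distrib[of "\<lambda>x. _ * x"]
        cong: if_cong)
  moreover have "sq_norm N (e t) = 1" if "t < N" for N t
    using that unfolding sq_norm_def e_def
    by (simp add: if_distrib[of cmod] if_distrib[of "\<lambda>x. x\<^sup>2"] cong: if_cong)
  ultimately show ?thesis
    using bnd \<open>p < r\<close> \<open>q < c\<close> unfolding form_bounded_def by (metis mult_1_right real_sqrt_one)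
qed

lemma sesq_linear_combination:
  assumes "\<And>i j. i < r \<Longrightarrow> j < c \<Longrightarrow> A $$ (i, j) = (\<Sum>w\<in>W. f w * B w $$ (i, j))"
  shows "sesq r c A x z = (\<Sum>w\<in>W. f w * sesq r c (B w) x z)"
proof -
  have "sesq r c A x z = (\<Sum>i<r. \<Sum>j<c. \<Sum>w\<in>W. f w * (cnj (x i) * B w $$ (i, j) * z j))"
    unfolding sesq_def using assms
    by (intro sum.cong refl) (simp add: sum_distrib_left sum_distrib_right mult_ac)
  also have "\<dots> = (\<Sum>i<r. \<Sum>w\<in>W. \<Sum>j<c. f w * (cnj (x i) * B w $$ (i, j) * z j))"
    by (intro sum.cong refl sum.swap)
  also have "\<dots> = (\<Sum>w\<in>W. \<Sum>i<r. \<Sum>j<c. f w * (cnj (x i) * B w $$ (i, j) * z j))"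
    by (rule sum.swap)
  also have "\<dots> = (\<Sum>w\<in>W. f w * sesq r c (B w) x z)"
    unfolding sesq_def by (simp add: sum_distrib_left)
  finally show ?thesis .
qed

lemma sesq_one_mat: "sesq N N (1\<^sub>m N) x x = of_real (sq_norm N x)"
  unfolding sesq_def sq_norm_def of_real_sum
  by (intro sum.cong refl)
    (simp add: if_distrib[of "\<lambda>y. _ * y"] if_distrib[of "\<lambda>y. y * _"] complex_norm_square[symmetric]
      mult.commute cong: if_cong)

lemma sesq_uminus: "A \<in> carrier_mat r c \<Longrightarrow> sesq r c (- A) x z = - sesq r c A x z"
  unfolding sesq_def by (simp add: sum_negf)

lemma form_bounded_uminus:
  "A \<in> carrier_mat r c \<Longrightarrow> form_bounded r c A K \<Longrightarrow> form_bounded r c (- A) K"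
  unfolding form_bounded_def by (simp add: sesq_uminus)

lemma sq_norm_permute: "bij_betw \<pi> {..<N} {..<N} \<Longrightarrow> sq_norm N (x \<circ> \<pi>) = sq_norm N x"
  unfolding sq_norm_def using sum.reindex_bij_betw[of \<pi> "{..<N}" "{..<N}" "\<lambda>i. (cmod (x i))\<^sup>2"] by simp

lemma sesq_permute:
  assumes "bij_betw \<pi> {..<N} {..<N}"
  shows "sesq N N (mat N N (\<lambda>(p, q). A $$ (\<pi> p, \<pi> q))) (x \<circ> \<pi>) (z \<circ> \<pi>) = sesq N N A x z"
proof -
  have "sesq N N (mat N N (\<lambda>(p, q). A $$ (\<pi> p, \<pi> q))) (x \<circ> \<pi>) (z \<circ> \<pi>) =
      (\<Sum>p<N. \<Sum>q<N. cnj (x (\<pi> p)) * A $$ (\<pi> p, \<pi> q) * z (\<pi> q))"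
    unfolding sesq_def by simp
  also have "\<dots> = (\<Sum>p<N. \<Sum>q<N. cnj (x (\<pi> p)) * A $$ (\<pi> p, q) * z q)"
  proof (rule sum.cong[OF refl])
    fix p
    show "(\<Sum>q<N. cnj (x (\<pi> p)) * A $$ (\<pi> p, \<pi> q) * z (\<pi> q)) = (\<Sum>q<N. cnj (x (\<pi> p)) * A $$ (\<pi> p, q) * z q)"
      using sum.reindex_bij_betw[OF assms, of "\<lambda>q. cnj (x (\<pi> p)) * A $$ (\<pi> p, q) * z q"] by simp
  qed
  also have "\<dots> = sesq N N A x z"
    unfolding sesq_def using sum.reindex_bij_betw[OF assms, of "\<lambda>p. \<Sum>q<N. cnj (x p) * A $$ (p, q) * z q"]
    by simp
  finally show ?thesis .
qed

lemma form_bounded_permute: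
  assumes \<pi>: "bij_betw \<pi> {..<N} {..<N}" and bnd: "form_bounded N N A K"
  shows "form_bounded N N (mat N N (\<lambda>(p, q). A $$ (\<pi> p, \<pi> q))) K"
  unfolding form_bounded_def
proof (intro allI)
  fix x z :: "nat \<Rightarrow> complex"
  define \<psi> where "\<psi> = inv_into {..<N} \<pi>"
  have inv: "\<psi> (\<pi> i) = i" if "i < N" for i
    using that \<pi> unfolding \<psi>_def by (simp add: bij_betw_imp_inj_on)
  have "sesq N N (mat N N (\<lambda>(p, q). A $$ (\<pi> p, \<pi> q))) x z =
      sesq N N (mat N N (\<lambda>(p, q). A $$ (\<pi> p, \<pi> q))) (x \<circ> \<psi> \<circ> \<pi>) (z \<circ> \<psi> \<circ> \<pi>)"
    by (rule sesq_cong) (simp_all add: inv)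
  also have "\<dots> = sesq N N A (x \<circ> \<psi>) (z \<circ> \<psi>)" by (rule sesq_permute[OF \<pi>])
  finally have "cmod (sesq N N (mat N N (\<lambda>(p, q). A $$ (\<pi> p, \<pi> q))) x z)
      \<le> K * (sqrt (sq_norm N (x \<circ> \<psi> \<circ> \<pi>)) * sqrt (sq_norm N (z \<circ> \<psi> \<circ> \<pi>)))"
    using bnd unfolding form_bounded_def sq_norm_permute[OF \<pi>] by simp
  moreover have "sq_norm N (y \<circ> \<psi> \<circ> \<pi>) = sq_norm N y" for y :: "nat \<Rightarrow> complex"
    by (rule sq_norm_cong) (simp add: inv)
  ultimately show "cmod (sesq N N (mat N N (\<lambda>(p, q). A $$ (\<pi> p, \<pi> q))) x z)
      \<le> K * (sqrt (sq_norm N x) * sqrt (sq_norm N z))" by simp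
qed

section \<open>Block-diagonal matrices, operator norm and Frobenius norm\<close>

lemma blockdiag_carrier:
  "A \<in> carrier_mat r1 c1 \<Longrightarrow> B \<in> carrier_mat r2 c2 \<Longrightarrow> blockdiag A B \<in> carrier_mat (r1 + r2) (c1 + c2)"
  unfolding blockdiag_def by auto

lemma index_blockdiag:
  assumes "A \<in> carrier_mat r1 c1" "B \<in> carrier_mat r2 c2" "i < r1 + r2" "j < c1 + c2"
  shows "blockdiag A B $$ (i, j) =
    (if i < r1 then if j < c1 then A $$ (i, j) else 0 else if j < c1 then 0 else B $$ (i - r1, j - c1))"
  using assms unfolding blockdiag_def by simp

lemma sesq_blockdiag:
  assumes "A \<in> carrier_mat r1 c1" "B \<in> carrier_mat r2 c2"
  shows "sesq (r1 + r2) (c1 + c2) (blockdiag A B) x z =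
    sesq r1 c1 A x z + sesq r2 c2 B (\<lambda>i. x (r1 + i)) (\<lambda>j. z (c1 + j))"
  unfolding sesq_def sum_lessThan_add using assms by (simp add: index_blockdiag)

lemma form_bounded_blockdiag:
  assumes A: "A \<in> carrier_mat r1 c1" and B: "B \<in> carrier_mat r2 c2" and "0 \<le> K"
    and bA: "form_bounded r1 c1 A K" and bB: "form_bounded r2 c2 B K"
  shows "form_bounded (r1 + r2) (c1 + c2) (blockdiag A B) (2 * K)"
  unfolding form_bounded_def
proof (intro allI)
  fix x z :: "nat \<Rightarrow> complex"
  define x2 z2 where "x2 = (\<lambda>i. x (r1 + i))" and "z2 = (\<lambda>j. z (c1 + j))"
  define X Z where "X = sqrt (sq_norm (r1 + r2) x)" and "Z = sqrt (sq_norm (c1 + c2) z)"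
  have le: "sqrt (sq_norm r1 x) \<le> X" "sqrt (sq_norm r2 x2) \<le> X"
    "sqrt (sq_norm c1 z) \<le> Z" "sqrt (sq_norm c2 z2) \<le> Z"
    unfolding X_def Z_def x2_def z2_def sq_norm_add_dim by (simp_all add: sq_norm_nonneg)
  have "cmod (sesq (r1 + r2) (c1 + c2) (blockdiag A B) x z) \<le> cmod (sesq r1 c1 A x z) + cmod (sesq r2 c2 B x2 z2)"
    unfolding sesq_blockdiag[OF A B] x2_def z2_def by (rule norm_triangle_ineq)
  also have "\<dots> \<le> K * (sqrt (sq_norm r1 x) * sqrt (sq_norm c1 z)) + K * (sqrt (sq_norm r2 x2) * sqrt (sq_norm c2 z2))"
    using bA bB unfolding form_bounded_def by (intro add_mono) auto
  also have "\<dots> \<le> K * (X * Z) + K * (X * Z)"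
    using le \<open>0 \<le> K\<close> by (intro add_mono mult_left_mono mult_mono) (auto simp: X_def sq_norm_nonneg)
  finally show "cmod (sesq (r1 + r2) (c1 + c2) (blockdiag A B) x z) \<le> 2 * K * (X * Z)" by simp
qed

lemma cvec_norm_sq_norm: "cvec_norm v = sqrt (sq_norm (dim_vec v) (\<lambda>i. v $ i))"
  unfolding cvec_norm_def sq_norm_def ..

lemma sesq_mult_mat_vec:
  assumes "A \<in> carrier_mat r c" "v \<in> carrier_vec c"
  shows "sesq r c A (\<lambda>i. (A *\<^sub>v v) $ i) (\<lambda>j. v $ j) = of_real (sq_norm r (\<lambda>i. (A *\<^sub>v v) $ i))"
proof -
  have "sesq r c A (\<lambda>i. (A *\<^sub>v v) $ i) (\<lambda>j. v $ j) = (\<Sum>i<r. cnj ((A *\<^sub>v v) $ i) * (A *\<^sub>v v) $ i)"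
    unfolding sesq_def using assms
    by (intro sum.cong refl) (simp add: scalar_prod_def atLeast0LessThan sum_distrib_left mult.assoc)
  also have "\<dots> = of_real (sq_norm r (\<lambda>i. (A *\<^sub>v v) $ i))"
    unfolding sq_norm_def of_real_sum
    by (intro sum.cong refl) (metis complex_norm_square mult.commute of_real_power)
  finally show ?thesis .
qed

lemma op_norm_le_of_form_bounded:
  assumes A: "A \<in> carrier_mat r c" and "0 \<le> K" and bnd: "form_bounded r c A K"
  shows "op_norm A \<le> K"
  unfolding op_norm_def
proof (rule cSup_least)
  have "cvec_norm (0\<^sub>v (dim_col A)) \<le> 1" unfolding cvec_norm_def by simp
  then have "cvec_norm (A *\<^sub>v 0\<^sub>v (dim_col A))
      \<in> {cvec_norm (A *\<^sub>v v) |v. v \<in> carrier_vec (dim_col A) \<and> cvec_norm v \<le> 1}"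
    by (intro CollectI exI[of _ "0\<^sub>v (dim_col A)"]) simp
  then show "{cvec_norm (A *\<^sub>v v) |v. v \<in> carrier_vec (dim_col A) \<and> cvec_norm v \<le> 1} \<noteq> {}"
    by (rule ex_in_conv[THEN iffD1, OF exI])
next
  fix x assume "x \<in> {cvec_norm (A *\<^sub>v v) |v. v \<in> carrier_vec (dim_col A) \<and> cvec_norm v \<le> 1}"
  then obtain v where x: "x = cvec_norm (A *\<^sub>v v)" and "v \<in> carrier_vec (dim_col A)"
    and "cvec_norm v \<le> 1"
    by blast
  then have v: "v \<in> carrier_vec c" using A by simp
  define Y V where "Y = sqrt (sq_norm r (\<lambda>i. (A *\<^sub>v v) $ i))" and "V = sqrt (sq_norm c (\<lambda>j. v $ j))"
  have "x = Y" "V \<le> 1"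
    using x v A \<open>cvec_norm v \<le> 1\<close> by (simp_all add: Y_def V_def cvec_norm_sq_norm)
  have "Y * Y = cmod (sesq r c A (\<lambda>i. (A *\<^sub>v v) $ i) (\<lambda>j. v $ j))"
    unfolding sesq_mult_mat_vec[OF A v] Y_def by (simp add: sq_norm_nonneg)
  also have "\<dots> \<le> K * (Y * V)"
    using bnd unfolding form_bounded_def Y_def V_def by blast
  finally have "Y * Y \<le> (K * V) * Y" by (simp add: mult_ac)
  moreover have "0 \<le> Y" "0 \<le> V" by (simp_all add: Y_def V_def sq_norm_nonneg)
  ultimately have "Y \<le> K * V"
    using \<open>0 \<le> K\<close> by (cases "Y = 0") (simp_all add: less_le mult_le_cancel_right_pos)
  also have "\<dots> \<le> K" using \<open>V \<le> 1\<close> \<open>0 \<le> K\<close> by (simp add: mult_left_le)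
  finally show "x \<le> K" using \<open>x = Y\<close> by simp
qed

lemma frob_norm_square: "(frob_norm A)\<^sup>2 = (\<Sum>i<dim_row A. \<Sum>j<dim_col A. (cmod (A $$ (i, j)))\<^sup>2)"
  unfolding frob_norm_def by (simp add: sum_nonneg)

lemma frob_norm_nonneg: "0 \<le> frob_norm A"
  unfolding frob_norm_def by (simp add: sum_nonneg)

lemma frob_norm_eq_0_imp_zero:
  assumes "M \<in> carrier_mat r c" "frob_norm M = 0"
  shows "M = 0\<^sub>m r c"
proof (rule eq_matI)
  fix i j assume "i < dim_row (0\<^sub>m r c)" "j < dim_col (0\<^sub>m r c)"
  then have "i < r" "j < c" by simp_all
  have "(\<Sum>i<r. \<Sum>j<c. (cmod (M $$ (i, j)))\<^sup>2) = 0"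
    using assms frob_norm_square[of M] by simp
  then have "(\<Sum>j<c. (cmod (M $$ (i, j)))\<^sup>2) = 0"
    using \<open>i < r\<close> by (simp add: sum_nonneg_eq_0_iff sum_nonneg)
  then show "M $$ (i, j) = 0\<^sub>m r c $$ (i, j)"
    using \<open>i < r\<close> \<open>j < c\<close> by (simp add: sum_nonneg_eq_0_iff)
qed (use assms in auto)

lemma frob_norm_blockdiag:
  assumes "A \<in> carrier_mat r1 c1" "B \<in> carrier_mat r2 c2"
  shows "(frob_norm (blockdiag A B))\<^sup>2 = (frob_norm A)\<^sup>2 + (frob_norm B)\<^sup>2"
  using assms blockdiag_carrier[OF assms] unfolding frob_norm_square
  by (simp add: sum_lessThan_add index_blockdiag sum.distrib)

lemma frob_norm_uminus: "frob_norm (- A) = frob_norm A"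
  unfolding frob_norm_def by simp

lemma frob_norm_le_of_entry_bound:
  assumes "A \<in> carrier_mat r c" "0 \<le> S" "\<And>i j. i < r \<Longrightarrow> j < c \<Longrightarrow> cmod (A $$ (i, j)) \<le> S"
  shows "frob_norm A \<le> sqrt (real (r * c)) * S"
proof -
  have "(frob_norm A)\<^sup>2 = (\<Sum>i<r. \<Sum>j<c. (cmod (A $$ (i, j)))\<^sup>2)"
    using assms(1) by (simp add: frob_norm_square)
  also have "\<dots> \<le> (\<Sum>i<r. \<Sum>j<c. S\<^sup>2)"
    using assms by (intro sum_mono power_mono) auto
  also have "\<dots> = (sqrt (real (r * c)) * S)\<^sup>2" by (simp add: power_mult_distrib)
  finally show ?thesis
    using assms(2) by (simp add: power2_le_iff_abs_le)
qed

lemma sum_cmod_le_frob_norm: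
  assumes "A \<in> carrier_mat r c"
  shows "(\<Sum>i<r. \<Sum>j<c. cmod (A $$ (i, j))) \<le> sqrt (real (r * c)) * frob_norm A"
proof -
  let ?S = "\<Sum>i<r. \<Sum>j<c. cmod (A $$ (i, j))"
  have "?S\<^sup>2 \<le> (\<Sum>(i, j)\<in>{..<r} \<times> {..<c}. (cmod (A $$ (i, j)))\<^sup>2) * real (card ({..<r} \<times> {..<c}))"
    unfolding sum.cartesian_product by (rule order_trans[OF sum_squared_le_sum_of_squares]) (simp add: case_prod_beta)
  also have "\<dots> = (sqrt (real (r * c)) * frob_norm A)\<^sup>2"
    using assms unfolding power_mult_distrib frob_norm_square sum.cartesian_product by (simp add: mult.commute)
  finally show ?thesis
    by (rule power2_le_imp_le) (simp add: frob_norm_nonneg)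
qed

section \<open>Hermitian matrices and the payoff observable\<close>

definition hermitian :: "nat \<Rightarrow> complex mat \<Rightarrow> bool" where
  "hermitian N M \<longleftrightarrow> M \<in> carrier_mat N N \<and> madj M = M"

lemma hermitian_entry:
  assumes "hermitian N M" "i < N" "j < N"
  shows "M $$ (j, i) = cnj (M $$ (i, j))"
proof -
  have "M \<in> carrier_mat N N" "madj M = M" using assms(1) by (simp_all add: hermitian_def)
  then have "M $$ (j, i) = madj M $$ (j, i)" by simp
  also have "\<dots> = cnj (M $$ (i, j))"
    using \<open>M \<in> carrier_mat N N\<close> assms(2,3) by (simp add: madj_def)
  finally show ?thesis .
qed

lemma madj_carrier: "A \<in> carrier_mat r c \<Longrightarrow> madj A \<in> carrier_mat c r"
  unfolding madj_def by simp

lemma madj_minus: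
  "A \<in> carrier_mat r c \<Longrightarrow> B \<in> carrier_mat r c \<Longrightarrow> madj (A - B) = madj A - madj B"
  unfolding madj_def by (rule eq_matI) auto

lemma madj_blockdiag:
  assumes "A \<in> carrier_mat r1 c1" "B \<in> carrier_mat r2 c2"
  shows "madj (blockdiag A B) = blockdiag (madj A) (madj B)"
proof (rule eq_matI)
  have adj: "madj A \<in> carrier_mat c1 r1" "madj B \<in> carrier_mat c2 r2"
    using assms by (simp_all add: madj_carrier)
  fix i j assume "i < dim_row (blockdiag (madj A) (madj B))" "j < dim_col (blockdiag (madj A) (madj B))"
  then have ij: "i < c1 + c2" "j < r1 + r2" using blockdiag_carrier[OF adj] by auto
  have "madj (blockdiag A B) $$ (i, j) = cnj (blockdiag A B $$ (j, i))"
    using ij blockdiag_carrier[OF assms] by (simp add: madj_def)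
  also have "\<dots> = blockdiag (madj A) (madj B) $$ (i, j)"
    using ij assms unfolding index_blockdiag[OF assms ij(2,1)] index_blockdiag[OF adj ij]
    by (simp add: madj_def)
  finally show "madj (blockdiag A B) $$ (i, j) = blockdiag (madj A) (madj B) $$ (i, j)" .
qed (use assms in \<open>simp_all add: blockdiag_def madj_def\<close>)

lemma hermitian_minus: "hermitian N A \<Longrightarrow> hermitian N B \<Longrightarrow> hermitian N (A - B)"
  unfolding hermitian_def by (auto simp: madj_minus)

lemma hermitian_blockdiag: "hermitian a A \<Longrightarrow> hermitian b B \<Longrightarrow> hermitian (a + b) (blockdiag A B)"
  unfolding hermitian_def by (auto simp: madj_blockdiag blockdiag_carrier)

lemma psd_hermitian: "psd N A \<Longrightarrow> hermitian N A"
  unfolding psd_def hermitian_def by blast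

lemma density_hermitian: "density N A \<Longrightarrow> hermitian N A"
  unfolding density_def by (simp add: psd_hermitian)

lemma sesq_hermitian_swap:
  assumes "hermitian N A"
  shows "sesq N N A z x = cnj (sesq N N A x z)"
proof -
  have "cnj (sesq N N A x z) = (\<Sum>i<N. \<Sum>j<N. x i * A $$ (j, i) * cnj (z j))"
    unfolding sesq_def cnj_sum using hermitian_entry[OF assms, symmetric] by (intro sum.cong refl) simp
  also have "\<dots> = sesq N N A z x"
    unfolding sesq_def by (subst sum.swap) (simp add: mult.commute mult.left_commute)
  finally show ?thesis by simp
qed

lemma psd_sesq_self:
  assumes "psd N A"
  shows "Im (sesq N N A x x) = 0" "0 \<le> Re (sesq N N A x x)"
proof -
  have A: "A \<in> carrier_mat N N" using assms by (simp add: psd_def)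
  have "scalar_prod (map_vec cnj (vec N x)) (A *\<^sub>v vec N x) = sesq N N A x x"
    using A unfolding scalar_prod_def mult_mat_vec_def sesq_def
    by (simp add: sum_distrib_left mult.assoc atLeast0LessThan row_def)
  moreover have "vec N x \<in> carrier_vec N" by simp
  ultimately show "Im (sesq N N A x x) = 0" "0 \<le> Re (sesq N N A x x)"
    using assms unfolding psd_def by metis+
qed

lemma sesq_add_scaled:
  "sesq N N A (\<lambda>i. x i + t * z i) (\<lambda>i. x i + t * z i) =
     sesq N N A x x + t * sesq N N A x z + cnj t * sesq N N A z x + cnj t * t * sesq N N A z z"
  unfolding sesq_def by (simp add: algebra_simps sum.distrib sum_distrib_left)

text \<open>Positivity of the form at x + t z, with t the unit complex number for which t s = -|s|.\<close>
lemma psd_sesq_le_half_sum: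
  assumes "psd N A"
  shows "cmod (sesq N N A x z) \<le> (Re (sesq N N A x x) + Re (sesq N N A z z)) / 2"
proof (cases "sesq N N A x z = 0")
  case True
  then show ?thesis using psd_sesq_self[OF assms] by simp
next
  case False
  define s where "s = sesq N N A x z"
  define t where "t = - cnj s / of_real (cmod s)"
  have ts: "t * s = - of_real (cmod s)" and tt: "cnj t * t = 1"
    using False unfolding t_def s_def
    by (simp_all add: complex_norm_square[symmetric] power2_eq_square mult.commute)
  have "0 \<le> Re (sesq N N A (\<lambda>i. x i + t * z i) (\<lambda>i. x i + t * z i))"
    using psd_sesq_self[OF assms] by blast
  also have "sesq N N A (\<lambda>i. x i + t * z i) (\<lambda>i. x i + t * z i) =
      sesq N N A x x + t * s + cnj (t * s) + sesq N N A z z"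
    unfolding sesq_add_scaled sesq_hermitian_swap[OF psd_hermitian[OF assms], of z x] s_def[symmetric]
    using tt by simp
  also have "Re \<dots> = Re (sesq N N A x x) - 2 * cmod s + Re (sesq N N A z z)"
    unfolding ts by simp
  finally show ?thesis unfolding s_def by simp
qed

lemma povm_sesq_sum:
  assumes "povm N Omega P"
  shows "(\<Sum>w\<in>Omega. sesq N N (P w) x x) = of_real (sq_norm N x)"
proof -
  have "sesq N N (1\<^sub>m N) x x = (\<Sum>w\<in>Omega. 1 * sesq N N (P w) x x)"
    using assms unfolding povm_def by (intro sesq_linear_combination) simp
  then show ?thesis by (simp add: sesq_one_mat)
qed

lemma payoff_sesq_le_half_sum:
  assumes P: "povm N Omega P" and u: "\<forall>w\<in>Omega. \<bar>u w\<bar> \<le> 1"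
  shows "cmod (sesq N N (payoff_obs N Omega P u) x z) \<le> (sq_norm N x + sq_norm N z) / 2"
proof -
  have psd: "psd N (P w)" if "w \<in> Omega" for w using P that by (simp add: povm_def)
  have "cmod (sesq N N (payoff_obs N Omega P u) x z) = cmod (\<Sum>w\<in>Omega. of_real (u w) * sesq N N (P w) x z)"
    by (subst sesq_linear_combination[where f = "\<lambda>w. of_real (u w)" and B = P]) (simp_all add: payoff_obs_def)
  also have "\<dots> \<le> (\<Sum>w\<in>Omega. \<bar>u w\<bar> * cmod (sesq N N (P w) x z))"
    by (rule order_trans[OF norm_sum]) (simp add: norm_mult)
  also have "\<dots> \<le> (\<Sum>w\<in>Omega. (Re (sesq N N (P w) x x) + Re (sesq N N (P w) z z)) / 2)"
  proof (rule sum_mono)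
    fix w assume "w \<in> Omega"
    then have "\<bar>u w\<bar> * cmod (sesq N N (P w) x z) \<le> cmod (sesq N N (P w) x z)"
      using u by (simp add: mult_left_le_one_le)
    also have "\<dots> \<le> (Re (sesq N N (P w) x x) + Re (sesq N N (P w) z z)) / 2"
      using psd_sesq_le_half_sum[OF psd[OF \<open>w \<in> Omega\<close>]] .
    finally show "\<bar>u w\<bar> * cmod (sesq N N (P w) x z) \<le> \<dots>" .
  qed
  also have "\<dots> = (Re (\<Sum>w\<in>Omega. sesq N N (P w) x x) + Re (\<Sum>w\<in>Omega. sesq N N (P w) z z)) / 2"
    by (simp add: sum.distrib sum_divide_distrib[symmetric])
  also have "\<dots> = (sq_norm N x + sq_norm N z) / 2"
    unfolding povm_sesq_sum[OF P] by simp
  finally show ?thesis .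
qed

lemma payoff_obs_form_bounded:
  "povm N Omega P \<Longrightarrow> \<forall>w\<in>Omega. \<bar>u w\<bar> \<le> 1 \<Longrightarrow> form_bounded N N (payoff_obs N Omega P u) 1"
  by (intro form_bounded_of_half_sum payoff_sesq_le_half_sum)

section \<open>Tensor products and the marginal payoff\<close>

lemma mult_index_less:
  assumes "l < a" "s < b"
  shows "l * b + s < a * (b::nat)"
proof -
  have "(l + 1) * b \<le> a * b" using assms(1) by (intro mult_le_mono1) simp
  then show ?thesis using assms(2) by simp
qed

lemma sum_mult_index: "(\<Sum>t<a * b. h t) = (\<Sum>l<a. \<Sum>s<(b::nat). h (l * b + s))"
proof -
  have "(\<Sum>t\<in>{l * b..<l * b + b}. h t) = (\<Sum>s<b. h (l * b + s))" for l
    using sum.shift_bounds_nat_ivl[of h 0 "l * b" b] by (simp add: atLeast0LessThan add.commute)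
  then show ?thesis by (simp flip: sum.nat_group[of _ b a] add: mult.commute)
qed

definition tensor :: "nat \<Rightarrow> (nat \<Rightarrow> complex) \<Rightarrow> (nat \<Rightarrow> complex) \<Rightarrow> nat \<Rightarrow> complex" where
  "tensor b f g t = f (t div b) * g (t mod b)"

lemma tensor_mult_index: "s < b \<Longrightarrow> tensor b f g (l * b + s) = f l * g s"
  unfolding tensor_def by simp

lemma sq_norm_tensor: "sq_norm (a * b) (tensor b f g) = sq_norm a f * sq_norm b g"
  unfolding sq_norm_def sum_mult_index
  by (simp add: tensor_mult_index norm_mult power_mult_distrib sum_product)

lemma sesq_tensor:
  "sesq (a * b) (a * b) U (tensor b f g) (tensor b f' g') =
    (\<Sum>l<a. \<Sum>s<b. \<Sum>l'<a. \<Sum>s'<b. cnj (f l * g s) * U $$ (l * b + s, l' * b + s') * (f' l' * g' s'))"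
  unfolding sesq_def sum_mult_index by (simp add: tensor_mult_index)

lemma index_kron:
  assumes "A \<in> carrier_mat ra ca" "B \<in> carrier_mat rb cb" "i < ra" "k < rb" "j < ca" "l < cb"
  shows "kron A B $$ (i * rb + k, j * cb + l) = A $$ (i, j) * B $$ (k, l)"
  using assms mult_index_less[of i ra k rb] mult_index_less[of j ca l cb] by (simp add: kron_def)

lemma kron_carrier:
  "A \<in> carrier_mat ra ca \<Longrightarrow> B \<in> carrier_mat rb cb \<Longrightarrow> kron A B \<in> carrier_mat (ra * rb) (ca * cb)"
  unfolding kron_def by simp

lemma index_madj_mult_kron:
  assumes U: "U \<in> carrier_mat (a * b) (a * b)" and A: "A \<in> carrier_mat a a" and B: "B \<in> carrier_mat b b"
    and "i < a" "k < b" "j < a" "l < b"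
  shows "(madj U * kron A B) $$ (i * b + k, j * b + l) =
    (\<Sum>i'<a. \<Sum>k'<b. cnj (U $$ (i' * b + k', i * b + k)) * (A $$ (i', j) * B $$ (k', l)))"
proof -
  have "(madj U * kron A B) $$ (i * b + k, j * b + l) =
      (\<Sum>t<a * b. cnj (U $$ (t, i * b + k)) * kron A B $$ (t, j * b + l))"
    using assms mult_index_less[of i a k b] mult_index_less[of j a l b] kron_carrier[OF A B]
    by (simp add: madj_def scalar_prod_def atLeast0LessThan)
  also have "\<dots> = (\<Sum>i'<a. \<Sum>k'<b. cnj (U $$ (i' * b + k', i * b + k)) * (A $$ (i', j) * B $$ (k', l)))"
    unfolding sum_mult_index using assms by (simp add: index_kron[OF A B])
  finally show ?thesis .
qed

definition marginal_payoff :: "nat \<Rightarrow> nat \<Rightarrow> complex mat \<Rightarrow> complex mat \<Rightarrow> complex mat" where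
  "marginal_payoff a b U D = ptrace_B a b (madj U * kron (1\<^sub>m a) D)"

lemma dim_marginal_payoff [simp]:
  "dim_row (marginal_payoff a b U D) = a" "dim_col (marginal_payoff a b U D) = a"
  unfolding marginal_payoff_def ptrace_B_def by simp_all

lemma marginal_payoff_carrier: "marginal_payoff a b U D \<in> carrier_mat a a"
  by (simp add: carrier_matI)

lemma index_marginal_payoff:
  assumes U: "U \<in> carrier_mat (a * b) (a * b)" and D: "D \<in> carrier_mat b b" and "i < a" "j < a"
  shows "marginal_payoff a b U D $$ (i, j) = (\<Sum>k<b. \<Sum>s<b. cnj (U $$ (j * b + s, i * b + k)) * D $$ (s, k))"
  using assms unfolding marginal_payoff_def ptrace_B_def
  by (simp add: index_madj_mult_kron[OF U one_carrier_mat D] sum.swap[where A = "{..<a}"]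
      if_distrib[of "\<lambda>x. x * _"] if_distrib[of "\<lambda>x. _ * x"] cong: if_cong)

lemma marginal_payoff_diff:
  assumes "U \<in> carrier_mat (a * b) (a * b)" "D \<in> carrier_mat b b" "D' \<in> carrier_mat b b"
  shows "marginal_payoff a b U D - marginal_payoff a b U D' = marginal_payoff a b U (D - D')"
  using assms index_marginal_payoff[OF assms(1) minus_carrier_mat[OF assms(3)]]
  by (intro eq_matI) (simp_all add: index_marginal_payoff sum_subtractf right_diff_distrib)

lemma marginal_payoff_linear_combination:
  assumes U: "U \<in> carrier_mat (a * b) (a * b)" and D: "D \<in> carrier_mat b b"
    and E: "\<And>r. r \<in> R \<Longrightarrow> E r \<in> carrier_mat b b"
    and dec: "\<And>s k. s < b \<Longrightarrow> k < b \<Longrightarrow> D $$ (s, k) = (\<Sum>r\<in>R. c r * E r $$ (s, k))"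
    and "i < a" "j < a"
  shows "marginal_payoff a b U D $$ (i, j) = (\<Sum>r\<in>R. c r * marginal_payoff a b U (E r) $$ (i, j))"
proof -
  have "marginal_payoff a b U D $$ (i, j) =
      (\<Sum>k<b. \<Sum>s<b. \<Sum>r\<in>R. c r * (cnj (U $$ (j * b + s, i * b + k)) * E r $$ (s, k)))"
    unfolding index_marginal_payoff[OF U D \<open>i < a\<close> \<open>j < a\<close>]
    by (intro sum.cong refl) (simp add: dec sum_distrib_left mult.left_commute)
  also have "\<dots> = (\<Sum>k<b. \<Sum>r\<in>R. \<Sum>s<b. c r * (cnj (U $$ (j * b + s, i * b + k)) * E r $$ (s, k)))"
    by (intro sum.cong refl sum.swap)
  also have "\<dots> = (\<Sum>r\<in>R. \<Sum>k<b. \<Sum>s<b. c r * (cnj (U $$ (j * b + s, i * b + k)) * E r $$ (s, k)))"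
    by (rule sum.swap)
  also have "\<dots> = (\<Sum>r\<in>R. c r * marginal_payoff a b U (E r) $$ (i, j))"
    using E \<open>i < a\<close> \<open>j < a\<close> by (simp add: index_marginal_payoff[OF U] sum_distrib_left)
  finally show ?thesis .
qed

definition swap_index :: "nat \<Rightarrow> nat \<Rightarrow> nat \<Rightarrow> nat" where
  "swap_index a b p = p mod a * b + p div a"

lemma swap_index_mult_index: "s < a \<Longrightarrow> swap_index a b (j * a + s) = s * b + j"
  unfolding swap_index_def by simp

lemma swap_index_less:
  assumes "p < b * a"
  shows "swap_index a b p < a * b"
proof -
  have "0 < a" using assms by (cases a) auto
  then show ?thesis
    using assms unfolding swap_index_def
    by (intro mult_index_less) (simp_all add: less_mult_imp_div_less mult.commute)
qed

lemma swap_index_swap_index: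
  assumes "p < a * b"
  shows "swap_index b a (swap_index a b p) = p"
proof -
  have "p div a < b" using assms by (simp add: less_mult_imp_div_less mult.commute)
  then have "swap_index b a (swap_index a b p) = p div a * a + p mod a"
    unfolding swap_index_def[of a b] by (simp add: swap_index_mult_index)
  then show ?thesis by simp
qed

lemma bij_swap_index: "bij_betw (swap_index a b) {..<a * b} {..<a * b}"
proof (rule bij_betw_byWitness[where f' = "swap_index b a"])
  show "\<forall>p\<in>{..<a * b}. swap_index b a (swap_index a b p) = p"
    "\<forall>q\<in>{..<a * b}. swap_index a b (swap_index b a q) = q"
    using swap_index_swap_index[of _ a b] swap_index_swap_index[of _ b a] by (auto simp: mult.commute)
  show "swap_index a b ` {..<a * b} \<subseteq> {..<a * b}" "swap_index b a ` {..<a * b} \<subseteq> {..<a * b}"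
    using swap_index_less[of _ a b] swap_index_less[of _ b a] by (auto simp: mult.commute)
qed

text \<open>The payoff observable of the game with the two players exchanged, acting on
  C^b (x) C^a instead of C^a (x) C^b.\<close>
definition swap_parties :: "nat \<Rightarrow> nat \<Rightarrow> complex mat \<Rightarrow> complex mat" where
  "swap_parties a b U = mat (b * a) (b * a) (\<lambda>(p, q). U $$ (swap_index a b p, swap_index a b q))"

lemma form_bounded_swap_parties:
  "form_bounded (a * b) (a * b) U K \<Longrightarrow> form_bounded (b * a) (b * a) (swap_parties a b U) K"
  unfolding swap_parties_def mult.commute[of b a] by (rule form_bounded_permute[OF bij_swap_index])

lemma ptrace_A_eq_marginal_payoff_swap_parties:
  assumes U: "U \<in> carrier_mat (a * b) (a * b)" and A: "A \<in> carrier_mat a a"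
  shows "ptrace_A a b (madj U * kron A (1\<^sub>m b)) = marginal_payoff b a (swap_parties a b U) A"
proof (rule eq_matI)
  have U': "swap_parties a b U \<in> carrier_mat (b * a) (b * a)" by (simp add: swap_parties_def)
  fix i j assume "i < dim_row (marginal_payoff b a (swap_parties a b U) A)"
    "j < dim_col (marginal_payoff b a (swap_parties a b U) A)"
  then have ij: "i < b" "j < b" by simp_all
  have "ptrace_A a b (madj U * kron A (1\<^sub>m b)) $$ (i, j) =
      (\<Sum>k<a. \<Sum>s<a. cnj (U $$ (s * b + j, k * b + i)) * A $$ (s, k))"
    using ij A unfolding ptrace_A_def
    by (simp add: index_madj_mult_kron[OF U A one_carrier_mat] if_distrib[of "\<lambda>x. _ * x"]
        cong: if_cong)
  also have "\<dots> = marginal_payoff b a (swap_parties a b U) A $$ (i, j)"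
    unfolding index_marginal_payoff[OF U' A ij] using ij mult_index_less[of j b _ a] mult_index_less[of i b _ a]
    by (simp add: swap_parties_def swap_index_mult_index)
  finally show "ptrace_A a b (madj U * kron A (1\<^sub>m b)) $$ (i, j) =
      marginal_payoff b a (swap_parties a b U) A $$ (i, j)" .
qed (simp_all add: ptrace_A_def)

lemma marginal_payoff_entry_le:
  assumes U: "U \<in> carrier_mat (a * b) (a * b)" "form_bounded (a * b) (a * b) U 1"
    and D: "D \<in> carrier_mat b b" and "i < a" "j < a"
  shows "cmod (marginal_payoff a b U D $$ (i, j)) \<le> (\<Sum>s<b. \<Sum>k<b. cmod (D $$ (s, k)))"
proof -
  have "cmod (marginal_payoff a b U D $$ (i, j)) \<le>
      (\<Sum>k<b. \<Sum>s<b. cmod (cnj (U $$ (j * b + s, i * b + k)) * D $$ (s, k)))"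
    unfolding index_marginal_payoff[OF U(1) D \<open>i < a\<close> \<open>j < a\<close>]
    by (rule order_trans[OF norm_sum sum_mono[OF norm_sum]])
  also have "\<dots> \<le> (\<Sum>k<b. \<Sum>s<b. cmod (D $$ (s, k)))"
  proof (intro sum_mono)
    fix k s assume "k \<in> {..<b}" "s \<in> {..<b}"
    then have "cmod (U $$ (j * b + s, i * b + k)) \<le> 1"
      using \<open>i < a\<close> \<open>j < a\<close> by (intro form_bounded_entry[OF U(2)] mult_index_less) auto
    then show "cmod (cnj (U $$ (j * b + s, i * b + k)) * D $$ (s, k)) \<le> cmod (D $$ (s, k))"
      by (simp add: norm_mult mult_left_le_one_le)
  qed
  also have "\<dots> = (\<Sum>s<b. \<Sum>k<b. cmod (D $$ (s, k)))"
    by (rule sum.swap)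
  finally show ?thesis .
qed

lemma marginal_payoff_frob_norm_le:
  assumes U: "U \<in> carrier_mat (a * b) (a * b)" "form_bounded (a * b) (a * b) U 1"
    and D: "D \<in> carrier_mat b b"
  shows "frob_norm (marginal_payoff a b U D) \<le> real (a * b) * frob_norm D"
proof -
  let ?S = "\<Sum>s<b. \<Sum>k<b. cmod (D $$ (s, k))"
  have "frob_norm (marginal_payoff a b U D) \<le> sqrt (real (a * a)) * ?S"
    using marginal_payoff_entry_le[OF U D]
    by (intro frob_norm_le_of_entry_bound marginal_payoff_carrier) (auto simp: sum_nonneg)
  also have "\<dots> \<le> sqrt (real (a * a)) * (sqrt (real (b * b)) * frob_norm D)"
    using sum_cmod_le_frob_norm[OF D] by (intro mult_left_mono) auto
  finally show ?thesis by (simp add: real_sqrt_mult)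
qed

lemma sesq_marginal_payoff_rank_one:
  assumes U: "U \<in> carrier_mat (a * b) (a * b)"
  shows "sesq a a (marginal_payoff a b U (mat b b (\<lambda>(s, k). w s * cnj (w k)))) y v =
    cnj (sesq (a * b) (a * b) U (tensor b v w) (tensor b y w))"
proof -
  have "sesq a a (marginal_payoff a b U (mat b b (\<lambda>(s, k). w s * cnj (w k)))) y v =
      (\<Sum>i<a. \<Sum>j<a. \<Sum>k<b. \<Sum>s<b. v j * w s * cnj (U $$ (j * b + s, i * b + k)) * cnj (y i) * cnj (w k))"
    unfolding sesq_def
    by (intro sum.cong refl) (simp add: index_marginal_payoff[OF U] sum_distrib_left sum_distrib_right mult_ac)
  also have "\<dots> = (\<Sum>j<a. \<Sum>s<b. \<Sum>i<a. \<Sum>k<b. v j * w s * cnj (U $$ (j * b + s, i * b + k)) * cnj (y i) * cnj (w k))"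
    by (subst sum.swap, rule sum.cong[OF refl], subst sum.swap, rule sum.cong[OF refl], rule sum.swap)
  also have "\<dots> = cnj (sesq (a * b) (a * b) U (tensor b v w) (tensor b y w))"
    unfolding sesq_tensor by (simp add: mult_ac)
  finally show ?thesis .
qed

lemma marginal_payoff_form_bounded:
  assumes U: "U \<in> carrier_mat (a * b) (a * b)" "form_bounded (a * b) (a * b) U 1"
    and D: "D \<in> carrier_mat b b"
    and dec: "\<And>s k. s < b \<Longrightarrow> k < b \<Longrightarrow> D $$ (s, k) = (\<Sum>r<R. c r * (w r s * cnj (w r k)))"
    and w: "\<And>r. r < R \<Longrightarrow> sq_norm b (w r) \<le> 1"
  shows "form_bounded a a (marginal_payoff a b U D) (\<Sum>r<R. cmod (c r))"
  unfolding form_bounded_def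
proof (intro allI)
  fix y v :: "nat \<Rightarrow> complex"
  define Y V where "Y = sqrt (sq_norm a y)" and "V = sqrt (sq_norm a v)"
  define E where "E r = mat b b (\<lambda>(s, k). w r s * cnj (w r k))" for r
  have "sesq a a (marginal_payoff a b U D) y v = (\<Sum>r<R. c r * sesq a a (marginal_payoff a b U (E r)) y v)"
    using U(1) D dec
    by (intro sesq_linear_combination marginal_payoff_linear_combination) (auto simp: E_def)
  also have "\<dots> = (\<Sum>r<R. c r * cnj (sesq (a * b) (a * b) U (tensor b v (w r)) (tensor b y (w r))))"
    unfolding E_def sesq_marginal_payoff_rank_one[OF U(1)] ..
  finally have "cmod (sesq a a (marginal_payoff a b U D) y v) \<le>
      (\<Sum>r<R. cmod (c r) * cmod (sesq (a * b) (a * b) U (tensor b v (w r)) (tensor b y (w r))))"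
    by (simp add: order_trans[OF norm_sum] norm_mult)
  also have "\<dots> \<le> (\<Sum>r<R. cmod (c r) * (Y * V))"
  proof (intro sum_mono mult_left_mono)
    fix r assume "r \<in> {..<R}"
    then have "sq_norm b (w r) \<le> 1" by (simp add: w)
    have "cmod (sesq (a * b) (a * b) U (tensor b v (w r)) (tensor b y (w r))) \<le>
        sqrt (sq_norm a v * sq_norm b (w r)) * sqrt (sq_norm a y * sq_norm b (w r))"
      using U(2) unfolding form_bounded_def by (metis sq_norm_tensor mult_1)
    also have "\<dots> \<le> sqrt (sq_norm a v) * sqrt (sq_norm a y)"
      using \<open>sq_norm b (w r) \<le> 1\<close>
      by (intro mult_mono) (simp_all add: real_sqrt_mult mult_left_le sq_norm_nonneg)
    finally show "cmod (sesq (a * b) (a * b) U (tensor b v (w r)) (tensor b y (w r))) \<le> Y * V"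
      by (simp add: Y_def V_def mult.commute)
  qed simp
  finally show "cmod (sesq a a (marginal_payoff a b U D) y v) \<le> (\<Sum>r<R. cmod (c r)) * (Y * V)"
    by (simp add: sum_distrib_right)
qed

section \<open>Spectral theorem for Hermitian matrices\<close>

definition cinner :: "nat \<Rightarrow> (nat \<Rightarrow> complex) \<Rightarrow> (nat \<Rightarrow> complex) \<Rightarrow> complex" where
  "cinner N x y = (\<Sum>i<N. cnj (x i) * y i)"

definition mat_app :: "nat \<Rightarrow> complex mat \<Rightarrow> (nat \<Rightarrow> complex) \<Rightarrow> nat \<Rightarrow> complex" where
  "mat_app N M x i = (\<Sum>j<N. M $$ (i, j) * x j)"

definition orthonormal :: "nat \<Rightarrow> nat \<Rightarrow> (nat \<Rightarrow> nat \<Rightarrow> complex) \<Rightarrow> bool" where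
  "orthonormal N k u \<longleftrightarrow> (\<forall>r<k. \<forall>s<k. cinner N (u r) (u s) = (if r = s then 1 else 0))"

lemma cinner_commute: "cinner N y x = cnj (cinner N x y)"
  unfolding cinner_def by (simp add: mult.commute)

lemma cinner_self: "cinner N x x = of_real (sq_norm N x)"
  unfolding cinner_def sq_norm_def of_real_sum
  by (intro sum.cong refl) (simp add: complex_norm_square[symmetric] mult.commute)

lemma cinner_scale_right: "cinner N y (\<lambda>i. c * x i) = c * cinner N y x"
  unfolding cinner_def by (simp add: sum_distrib_left mult.left_commute)

lemma mat_app_scale: "mat_app N M (\<lambda>j. c * x j) i = c * mat_app N M x i"
  unfolding mat_app_def by (simp add: sum_distrib_left mult.left_commute)

lemma cinner_mat_app_eigenvector:
  assumes "\<And>i. i < N \<Longrightarrow> mat_app N M x i = e * x i"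
  shows "cinner N y (mat_app N M x) = e * cinner N y x"
  using assms unfolding cinner_def by (simp add: sum_distrib_left mult.left_commute)

lemma hermitian_cinner_mat_app:
  assumes "hermitian N M"
  shows "cinner N (mat_app N M x) y = cinner N x (mat_app N M y)"
proof -
  have "cinner N (mat_app N M x) y = (\<Sum>i<N. \<Sum>j<N. M $$ (j, i) * cnj (x j) * y i)"
    unfolding cinner_def mat_app_def using hermitian_entry[OF assms, symmetric]
    by (simp add: sum_distrib_left sum_distrib_right mult.commute)
  also have "\<dots> = cinner N x (mat_app N M y)"
    unfolding cinner_def mat_app_def by (subst sum.swap) (simp add: sum_distrib_left mult_ac)
  finally show ?thesis .
qed

lemma unit_multiple:
  assumes "sq_norm N x \<noteq> 0"
  obtains c where "c \<noteq> 0" "cinner N (\<lambda>i. c * x i) (\<lambda>i. c * x i) = 1"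
proof
  let ?c = "complex_of_real (inverse (sqrt (sq_norm N x)))"
  have "0 < sq_norm N x" using assms sq_norm_nonneg less_le by metis
  then show "?c \<noteq> 0" by simp
  have "(cmod ?c)\<^sup>2 * sq_norm N x = 1"
    using \<open>0 < sq_norm N x\<close> by (simp add: norm_inverse power_inverse)
  then show "cinner N (\<lambda>i. ?c * x i) (\<lambda>i. ?c * x i) = 1"
    unfolding cinner_self sq_norm_scale by simp
qed

lemma orthonormal_sq_norm: "orthonormal N k u \<Longrightarrow> r < k \<Longrightarrow> sq_norm N (u r) = 1"
  using cinner_self[of N "u r"] unfolding orthonormal_def by (metis of_real_eq_1_iff)

lemma orthonormal_extend:
  assumes "orthonormal N k u" "cinner N p p = 1" "\<forall>r<k. cinner N (u r) p = 0"
  shows "orthonormal N (Suc k) (u(k := p))"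
proof -
  have "cinner N p (u r) = 0" if "r < k" for r
    using assms(3) that cinner_commute[of N p "u r"] by simp
  then show ?thesis using assms unfolding orthonormal_def by (auto simp: less_Suc_eq)
qed

lemma mtrace_mult_comm:
  assumes "A \<in> carrier_mat n m" "B \<in> carrier_mat m n"
  shows "mtrace (A * B) = mtrace (B * A)"
proof -
  have "mtrace (A * B) = (\<Sum>i<n. \<Sum>k<m. A $$ (i, k) * B $$ (k, i))"
    using assms unfolding mtrace_def by (simp add: scalar_prod_def atLeast0LessThan)
  also have "\<dots> = (\<Sum>k<m. \<Sum>i<n. B $$ (k, i) * A $$ (i, k))"
    by (subst sum.swap) (simp add: mult.commute)
  also have "\<dots> = mtrace (B * A)"
    using assms unfolding mtrace_def by (simp add: scalar_prod_def atLeast0LessThan)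
  finally show ?thesis .
qed

lemma mtrace_similar:
  assumes "similar_mat_wit A B P Q"
  shows "mtrace A = mtrace B"
proof -
  define n where "n = dim_row A"
  note wit = similar_mat_witD[OF n_def assms]
  have "mtrace A = mtrace (P * (B * Q))"
    using wit(3-7) assoc_mult_mat[of P n n B n Q n] by simp
  also have "\<dots> = mtrace (B * Q * P)"
    using wit(5-7) by (intro mtrace_mult_comm[of P n n]) auto
  also have "\<dots> = mtrace B"
    using wit(2,5-7) assoc_mult_mat[of B n n Q n P n] by simp
  finally show ?thesis .
qed

lemma mtrace_square_strictly_upper_triangular:
  assumes "B \<in> carrier_mat n n" "upper_triangular B" "\<forall>i<n. B $$ (i, i) = 0"
  shows "mtrace (B * B) = 0"
proof -
  have zero: "B $$ (i, k) * B $$ (k, i) = 0" if "i < n" "k < n" for i k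
    using assms that by (cases i k rule: linorder_cases) (auto simp: upper_triangular_def)
  show ?thesis
    using assms(1) unfolding mtrace_def by (simp add: scalar_prod_def atLeast0LessThan zero)
qed

lemma mtrace_hermitian_square:
  assumes "hermitian N M"
  shows "mtrace (M * M) = of_real ((frob_norm M)\<^sup>2)"
proof -
  have M: "M \<in> carrier_mat N N" using assms by (simp add: hermitian_def)
  have "mtrace (M * M) = (\<Sum>i<N. \<Sum>k<N. M $$ (i, k) * M $$ (k, i))"
    using M unfolding mtrace_def by (simp add: scalar_prod_def atLeast0LessThan)
  also have "\<dots> = (\<Sum>i<N. \<Sum>k<N. of_real ((cmod (M $$ (i, k)))\<^sup>2))"
  proof (intro sum.cong refl)
    fix i k assume "i \<in> {..<N}" "k \<in> {..<N}"
    then have "M $$ (k, i) = cnj (M $$ (i, k))" using hermitian_entry[OF assms] by blast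
    then show "M $$ (i, k) * M $$ (k, i) = of_real ((cmod (M $$ (i, k)))\<^sup>2)"
      by (simp add: complex_norm_square[symmetric])
  qed
  also have "\<dots> = of_real ((frob_norm M)\<^sup>2)"
    using M by (simp add: frob_norm_square)
  finally show ?thesis .
qed

lemma mat_app_eigenvector:
  assumes "M \<in> carrier_mat N N" "eigenvector M v e"
  shows "sq_norm N (\<lambda>i. v $ i) \<noteq> 0" "\<And>i. i < N \<Longrightarrow> mat_app N M (\<lambda>i. v $ i) i = e * v $ i"
proof -
  have v: "v \<in> carrier_vec N" "v \<noteq> 0\<^sub>v N" "M *\<^sub>v v = e \<cdot>\<^sub>v v"
    using assms unfolding eigenvector_def by auto
  show "sq_norm N (\<lambda>i. v $ i) \<noteq> 0"
    using v(1,2) unfolding sq_norm_eq_0_iff by auto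
  fix i assume "i < N"
  then have "(M *\<^sub>v v) $ i = e * v $ i" using v by simp
  then show "mat_app N M (\<lambda>i. v $ i) i = e * v $ i"
    using assms(1) v(1) \<open>i < N\<close> unfolding mat_app_def by (simp add: scalar_prod_def atLeast0LessThan)
qed

text \<open>If every eigenvalue vanished, a Schur form B of M would be strictly upper triangular,
  so the squared Frobenius norm of M, being the trace of M * M, would equal the trace of
  B * B, which is zero.\<close>
lemma hermitian_nonzero_eigenvector:
  assumes H: "hermitian N M" and nz: "M \<noteq> 0\<^sub>m N N"
  obtains x e where "sq_norm N x \<noteq> 0" "e \<noteq> 0" "\<And>i. i < N \<Longrightarrow> mat_app N M x i = e * x i"
proof -
  have M: "M \<in> carrier_mat N N" using H by (simp add: hermitian_def)
  obtain es where cp: "char_poly M = (\<Prod>a\<leftarrow>es. [:- a, 1:])" and len: "length es = N"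
    using char_poly_factorized[OF M] by blast
  obtain B P Q where "schur_decomposition M es = (B, P, Q)" by (cases "schur_decomposition M es") auto
  from schur_decomposition[OF M cp this] have sim: "similar_mat_wit M B P Q"
    and ut: "upper_triangular B" and dg: "diag_mat B = es" by auto
  have B: "B \<in> carrier_mat N N" using similar_mat_witD2[OF M sim] by simp
  have "\<exists>e\<in>set es. e \<noteq> 0"
  proof (rule ccontr)
    assume "\<not> (\<exists>e\<in>set es. e \<noteq> 0)"
    then have "\<forall>i<N. B $$ (i, i) = 0"
      using B dg len by (auto simp: diag_mat_def)
    then have "mtrace (B * B) = 0" by (rule mtrace_square_strictly_upper_triangular[OF B ut])
    moreover have "similar_mat_wit (M * M) (B * B) P Q"
      using similar_mat_wit_pow[OF sim, of 2] M B by (simp add: numeral_2_eq_2)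
    ultimately have "of_real ((frob_norm M)\<^sup>2) = (0 :: complex)"
      using mtrace_similar mtrace_hermitian_square[OF H] by metis
    then have "M = 0\<^sub>m N N" using frob_norm_eq_0_imp_zero[OF M] by simp
    then show False using nz by contradiction
  qed
  then obtain e where "e \<in> set es" "e \<noteq> 0" by blast
  then have "poly (char_poly M) e = 0" unfolding cp poly_prod_list by auto
  then obtain v where "eigenvector M v e"
    using eigenvalue_root_char_poly[OF M] unfolding eigenvalue_def by blast
  with mat_app_eigenvector[OF M] \<open>e \<noteq> 0\<close> show ?thesis using that by metis
qed

lemma hermitian_eigenvalue_real:
  assumes "hermitian N M" "sq_norm N x \<noteq> 0" "\<And>i. i < N \<Longrightarrow> mat_app N M x i = e * x i"
  shows "e = of_real (Re e)"
proof -
  have "e * of_real (sq_norm N x) = cinner N x (mat_app N M x)"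
    by (simp add: cinner_mat_app_eigenvector[OF assms(3)] cinner_self)
  also have "\<dots> = cnj (cinner N x (mat_app N M x))"
    using cinner_commute[of N x "mat_app N M x"] by (simp add: hermitian_cinner_mat_app[OF assms(1)])
  also have "\<dots> = cnj e * of_real (sq_norm N x)"
    by (simp add: cinner_mat_app_eigenvector[OF assms(3)] cinner_self)
  finally have "cnj e = e" using assms(2) by simp
  then show ?thesis by (metis Reals_cnj_iff of_real_Re)
qed

lemma hermitian_eigenvector_orthogonal:
  assumes "hermitian N M" "e \<noteq> 0" "\<And>i. i < N \<Longrightarrow> mat_app N M x i = e * x i"
    and "\<And>i. i < N \<Longrightarrow> mat_app N M y i = 0"
  shows "cinner N y x = 0"
proof -
  have "e * cinner N y x = cinner N (mat_app N M y) x"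
    by (simp add: hermitian_cinner_mat_app[OF assms(1)] cinner_mat_app_eigenvector[OF assms(3)])
  also have "\<dots> = 0" using assms(4) unfolding cinner_def by simp
  finally show ?thesis using assms(2) by simp
qed

text \<open>q l is the basis vector e_l minus its projection onto the span of the u r. If all q l
  vanished, all e_l would lie in that span, and summing the squared norms of their projections
  would give N = k.\<close>
lemma orthogonal_complement_nonzero:
  assumes O: "orthonormal N k u" and "k < N"
  obtains q where "sq_norm N q \<noteq> 0" "\<forall>r<k. cinner N (u r) q = 0"
proof -
  define q where "q l a = (if a = l then 1 else 0) - (\<Sum>r<k. cnj (u r l) * u r a)" for l a
  have orth: "cinner N (u t) (q l) = 0" if "t < k" "l < N" for t l
  proof -
    have "cinner N (u t) (q l) = cnj (u t l) - (\<Sum>r<k. cnj (u r l) * cinner N (u t) (u r))"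
      using \<open>l < N\<close> unfolding q_def cinner_def
      by (simp add: right_diff_distrib sum_subtractf sum_distrib_left mult_ac sum.swap[of _ "{..<k}"]
          if_distrib[of "\<lambda>x. _ * x"] cong: if_cong)
    also have "(\<Sum>r<k. cnj (u r l) * cinner N (u t) (u r)) = cnj (u t l)"
      using O \<open>t < k\<close> unfolding orthonormal_def
      by (simp add: if_distrib[of "\<lambda>x. _ * x"] cong: if_cong)
    finally show ?thesis by simp
  qed
  have "\<exists>l<N. sq_norm N (q l) \<noteq> 0"
  proof (rule ccontr)
    assume "\<not> (\<exists>l<N. sq_norm N (q l) \<noteq> 0)"
    then have "q l l = 0" if "l < N" for l using that unfolding sq_norm_eq_0_iff by blast
    then have "(\<Sum>r<k. cnj (u r l) * u r l) = 1" if "l < N" for l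
      using that unfolding q_def by simp
    then have "(of_nat N :: complex) = (\<Sum>l<N. \<Sum>r<k. cnj (u r l) * u r l)" by simp
    also have "\<dots> = (\<Sum>r<k. cinner N (u r) (u r))" unfolding cinner_def by (rule sum.swap)
    also have "\<dots> = of_nat k" using O unfolding orthonormal_def by simp
    finally show False using \<open>k < N\<close> by simp
  qed
  then show ?thesis using that orth by blast
qed

lemma hermitian_minus_rank_one_sum:
  assumes "hermitian N M"
  shows "hermitian N (mat N N (\<lambda>(a, b). M $$ (a, b) - (\<Sum>r<k. of_real (lam r) * (u r a * cnj (u r b)))))"
  unfolding hermitian_def
proof
  show "madj (mat N N (\<lambda>(a, b). M $$ (a, b) - (\<Sum>r<k. of_real (lam r) * (u r a * cnj (u r b))))) =
      mat N N (\<lambda>(a, b). M $$ (a, b) - (\<Sum>r<k. of_real (lam r) * (u r a * cnj (u r b))))"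
    by (rule eq_matI) (simp_all add: madj_def hermitian_entry[OF assms, symmetric] mult.commute)
qed simp

text \<open>Deflation: the eigenvectors of the Hermitian matrix M1 = M - (sum of lam r u r u r*) with
  nonzero eigenvalue are orthogonal to the u r, which M1 annihilates; if M1 = 0, any vector
  orthogonal to the u r is an eigenvector of M for the eigenvalue 0.\<close>
lemma hermitian_eigenvector_orthogonal_to_family:
  assumes H: "hermitian N M" and O: "orthonormal N k u" and "k < N"
    and eig: "\<And>r i. r < k \<Longrightarrow> i < N \<Longrightarrow> mat_app N M (u r) i = of_real (lam r) * u r i"
  obtains x e where "sq_norm N x \<noteq> 0" "\<forall>r<k. cinner N (u r) x = 0"
    "\<And>i. i < N \<Longrightarrow> mat_app N M x i = of_real e * x i"
proof -
  define M1 where "M1 = mat N N (\<lambda>(a, b). M $$ (a, b) - (\<Sum>r<k. of_real (lam r) * (u r a * cnj (u r b))))"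
  have M1_app: "mat_app N M1 x a = mat_app N M x a - (\<Sum>r<k. of_real (lam r) * u r a * cinner N (u r) x)"
    if "a < N" for x a
    using that unfolding M1_def mat_app_def cinner_def
    by (simp add: right_diff_distrib sum_subtractf sum_distrib_left sum_distrib_right mult_ac
        sum.swap[of _ "{..<N}" "{..<k}"])
  have "hermitian N M1"
    unfolding M1_def by (rule hermitian_minus_rank_one_sum[OF H])
  have M1_u: "mat_app N M1 (u s) a = 0" if "s < k" "a < N" for s a
    using O that unfolding M1_app[OF \<open>a < N\<close>] eig[OF that] orthonormal_def
    by (simp add: if_distrib[of "\<lambda>x. _ * x"] cong: if_cong)
  show ?thesis
  proof (cases "M1 = 0\<^sub>m N N")
    case True
    obtain q where q: "sq_norm N q \<noteq> 0" "\<forall>r<k. cinner N (u r) q = 0"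
      using orthogonal_complement_nonzero[OF O \<open>k < N\<close>] .
    have "mat_app N M q i = of_real 0 * q i" if "i < N" for i
      using M1_app[OF that, of q] q(2) True that by (simp add: mat_app_def)
    then show ?thesis using that q by blast
  next
    case False
    then obtain x e where x: "sq_norm N x \<noteq> 0" "e \<noteq> 0" "\<And>i. i < N \<Longrightarrow> mat_app N M1 x i = e * x i"
      using hermitian_nonzero_eigenvector[OF \<open>hermitian N M1\<close>] by blast
    have orth: "\<forall>r<k. cinner N (u r) x = 0"
      using hermitian_eigenvector_orthogonal[OF \<open>hermitian N M1\<close> x(2,3)] M1_u by blast
    have "mat_app N M x i = of_real (Re e) * x i" if "i < N" for i
      using M1_app[OF that, of x] orth x(3)[OF that]
        hermitian_eigenvalue_real[OF \<open>hermitian N M1\<close> x(1,3)] by simp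
    then show ?thesis using that x(1) orth by blast
  qed
qed

lemma hermitian_orthonormal_eigenvectors:
  assumes H: "hermitian N M" and "k \<le> N"
  shows "\<exists>u lam. orthonormal N k u \<and>
    (\<forall>r<k. \<forall>i<N. mat_app N M (u r) i = of_real (lam r) * u r i)"
  using \<open>k \<le> N\<close>
proof (induction k)
  case 0
  then show ?case by (simp add: orthonormal_def)
next
  case (Suc k)
  then obtain u lam where O: "orthonormal N k u"
    and eig: "\<forall>r<k. \<forall>i<N. mat_app N M (u r) i = of_real (lam r) * u r i" by auto
  obtain x e where x: "sq_norm N x \<noteq> 0" "\<forall>r<k. cinner N (u r) x = 0"
    "\<And>i. i < N \<Longrightarrow> mat_app N M x i = of_real e * x i"
    using hermitian_eigenvector_orthogonal_to_family[OF H O, of lam] Suc.prems eig by auto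
  obtain c where "c \<noteq> 0" and unit: "cinner N (\<lambda>i. c * x i) (\<lambda>i. c * x i) = 1"
    using unit_multiple[OF x(1)] by blast
  have "orthonormal N (Suc k) (u(k := (\<lambda>i. c * x i)))"
    using x(2) by (intro orthonormal_extend[OF O unit]) (simp add: cinner_scale_right)
  moreover have "\<forall>r<Suc k. \<forall>i<N. mat_app N M ((u(k := (\<lambda>i. c * x i))) r) i =
      of_real ((lam(k := e)) r) * (u(k := (\<lambda>i. c * x i))) r i"
    using eig x(3) by (auto simp: less_Suc_eq mat_app_scale)
  ultimately show ?case by blast
qed

definition basis_mat :: "nat \<Rightarrow> (nat \<Rightarrow> nat \<Rightarrow> complex) \<Rightarrow> complex mat" where
  "basis_mat N u = mat N N (\<lambda>(a, r). u r a)"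

lemma basis_mat_unitary:
  assumes "orthonormal N N u"
  shows "madj (basis_mat N u) * basis_mat N u = 1\<^sub>m N" "basis_mat N u * madj (basis_mat N u) = 1\<^sub>m N"
proof -
  show left: "madj (basis_mat N u) * basis_mat N u = 1\<^sub>m N"
    using assms unfolding orthonormal_def
    by (intro eq_matI) (simp_all add: basis_mat_def madj_def cinner_def scalar_prod_def atLeast0LessThan)
  show "basis_mat N u * madj (basis_mat N u) = 1\<^sub>m N"
    by (rule mat_mult_left_right_inverse[OF _ _ left]) (simp_all add: basis_mat_def madj_def)
qed

lemma orthonormal_complete:
  assumes "orthonormal N N u" "a < N" "b < N"
  shows "(\<Sum>r<N. u r a * cnj (u r b)) = (if a = b then 1 else 0)"
proof -
  have "(basis_mat N u * madj (basis_mat N u)) $$ (a, b) = (\<Sum>r<N. u r a * cnj (u r b))"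
    using assms(2,3) by (simp add: basis_mat_def madj_def scalar_prod_def atLeast0LessThan)
  then show ?thesis using basis_mat_unitary(2)[OF assms(1)] assms(2,3) by simp
qed

lemma hermitian_spectral_decomposition:
  assumes H: "hermitian N M"
  obtains u lam where "orthonormal N N u"
    "\<And>a b. a < N \<Longrightarrow> b < N \<Longrightarrow> M $$ (a, b) = (\<Sum>r<N. of_real (lam r) * (u r a * cnj (u r b)))"
proof -
  obtain u lam where O: "orthonormal N N u"
    and eig: "\<forall>r<N. \<forall>i<N. mat_app N M (u r) i = of_real (lam r) * u r i"
    using hermitian_orthonormal_eigenvectors[OF H order_refl] by blast
  have "M $$ (a, b) = (\<Sum>r<N. of_real (lam r) * (u r a * cnj (u r b)))" if "a < N" "b < N" for a b
  proof -
    have "M $$ (a, b) = (\<Sum>c<N. M $$ (a, c) * (\<Sum>r<N. u r c * cnj (u r b)))"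
      using that by (simp add: orthonormal_complete[OF O] if_distrib[of "\<lambda>x. _ * x"] cong: if_cong)
    also have "\<dots> = (\<Sum>c<N. \<Sum>r<N. M $$ (a, c) * u r c * cnj (u r b))"
      by (simp add: sum_distrib_left mult.assoc)
    also have "\<dots> = (\<Sum>r<N. mat_app N M (u r) a * cnj (u r b))"
      unfolding mat_app_def by (subst sum.swap) (simp add: sum_distrib_right)
    also have "\<dots> = (\<Sum>r<N. of_real (lam r) * (u r a * cnj (u r b)))"
      using eig \<open>a < N\<close> by (simp add: mult.assoc)
    finally show ?thesis .
  qed
  with O that show ?thesis by blast
qed

lemma proots_linear_factors: "proots (\<Prod>a\<leftarrow>xs. [:- a, 1:]) = mset (xs :: complex list)"
proof -
  have "0 \<notin> set (map (\<lambda>a. [:- a, 1:]) xs)" by auto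
  from proots_prod_list[OF this]
  have "proots (\<Prod>a\<leftarrow>xs. [:- a, 1:]) = (\<Sum>a\<leftarrow>xs. proots [:- a, 1:])"
    by (simp add: o_def)
  also have "\<dots> = mset xs" by (induction xs) auto
  finally show ?thesis .
qed

lemma diag_mat_mat_diag: "diag_mat (mat_diag N f) = map f [0..<N]"
  by (simp add: diag_mat_def mat_diag_def)

lemma mat_eq_basis_mat_diag:
  assumes "M \<in> carrier_mat N N"
    and dec: "\<And>a b. a < N \<Longrightarrow> b < N \<Longrightarrow> M $$ (a, b) = (\<Sum>r<N. c r * (u r a * cnj (u r b)))"
  shows "M = basis_mat N u * mat_diag N c * madj (basis_mat N u)"
proof (rule eq_matI)
  have W: "basis_mat N u \<in> carrier_mat N N" by (simp add: basis_mat_def)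
  fix a b assume "a < dim_row (basis_mat N u * mat_diag N c * madj (basis_mat N u))"
    "b < dim_col (basis_mat N u * mat_diag N c * madj (basis_mat N u))"
  then have "a < N" "b < N" using W by (auto simp: madj_def)
  then show "M $$ (a, b) = (basis_mat N u * mat_diag N c * madj (basis_mat N u)) $$ (a, b)"
    unfolding mat_diag_mult_right[OF W] using W
    by (simp add: dec basis_mat_def madj_def scalar_prod_def atLeast0LessThan mult_ac)
qed (use assms in \<open>auto simp: basis_mat_def madj_def\<close>)

lemma char_poly_madj_mult_spectral:
  assumes H: "hermitian N M" and O: "orthonormal N N u"
    and dec: "\<And>a b. a < N \<Longrightarrow> b < N \<Longrightarrow> M $$ (a, b) = (\<Sum>r<N. of_real (lam r) * (u r a * cnj (u r b)))"
  shows "char_poly (madj M * M) = (\<Prod>a\<leftarrow>map (\<lambda>r. of_real ((lam r)\<^sup>2)) [0..<N]. [:- a, 1:])"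
proof -
  define W L where "W = basis_mat N u" and "L = mat_diag N (\<lambda>r. complex_of_real (lam r))"
  have W: "W \<in> carrier_mat N N" "madj W \<in> carrier_mat N N" and L: "L \<in> carrier_mat N N"
    by (simp_all add: W_def L_def basis_mat_def madj_def)
  have M: "M = W * L * madj W"
    unfolding W_def L_def using H dec by (intro mat_eq_basis_mat_diag) (simp_all add: hermitian_def)
  have "madj M * M = W * L * madj W * (W * L * madj W)"
    using H M by (simp add: hermitian_def)
  also have "\<dots> = W * L * (madj W * W) * L * madj W"
    using W L by (simp add: assoc_mult_mat[of _ N N _ N _ N])
  also have "\<dots> = W * (L * L) * madj W"
    using W L by (simp add: basis_mat_unitary[OF O, folded W_def] assoc_mult_mat[of _ N N _ N _ N])
  finally have "similar_mat (madj M * M) (L * L)"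
    using W L basis_mat_unitary[OF O, folded W_def]
    by (auto simp: similar_mat_def similar_mat_wit_def Let_def)
  moreover have "L * L = mat_diag N (\<lambda>r. of_real ((lam r)\<^sup>2))"
    unfolding L_def by (simp add: power2_eq_square)
  ultimately have "char_poly (madj M * M) = char_poly (mat_diag N (\<lambda>r. of_real ((lam r)\<^sup>2)))"
    by (simp add: char_poly_similar)
  also have "\<dots> = (\<Prod>a\<leftarrow>map (\<lambda>r. of_real ((lam r)\<^sup>2)) [0..<N]. [:- a, 1:])"
    using char_poly_upper_triangular[OF mat_diag_dim] unfolding diag_mat_mat_diag
    by (simp add: upper_triangular_def mat_diag_def)
  finally show ?thesis .
qed

lemma trace_norm_spectral:
  assumes H: "hermitian N M" and O: "orthonormal N N u"
    and dec: "\<And>a b. a < N \<Longrightarrow> b < N \<Longrightarrow> M $$ (a, b) = (\<Sum>r<N. of_real (lam r) * (u r a * cnj (u r b)))"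
  shows "trace_norm M = (\<Sum>r<N. \<bar>lam r\<bar>)"
proof -
  have roots: "proots (char_poly (madj M * M)) = mset (map (\<lambda>r. of_real ((lam r)\<^sup>2)) [0..<N])"
    using char_poly_madj_mult_spectral[OF H O dec] proots_linear_factors by metis
  have "trace_norm M = sum_list (map (\<lambda>r. sqrt (Re (of_real ((lam r)\<^sup>2)))) [0..<N])"
    unfolding trace_norm_def roots mset_map[symmetric] sum_mset_sum_list map_map o_def by (rule refl)
  also have "\<dots> = (\<Sum>r<N. \<bar>lam r\<bar>)"
    by (simp add: interv_sum_list_conv_sum_set_nat atLeast0LessThan)
  finally show ?thesis .
qed

section \<open>Lipschitz continuity of the game operator\<close>

definition game_operator :: "nat \<Rightarrow> nat \<Rightarrow> complex mat \<Rightarrow> complex mat \<Rightarrow> complex mat \<Rightarrow> complex mat" where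
  "game_operator a b U A B =
     blockdiag (marginal_payoff a b U B) (- marginal_payoff b a (swap_parties a b U) A)"

lemma game_operator_frob_norm_le:
  assumes U: "U \<in> carrier_mat (a * b) (a * b)" "form_bounded (a * b) (a * b) U 1"
    and A: "A \<in> carrier_mat a a" and B: "B \<in> carrier_mat b b"
  shows "frob_norm (game_operator a b U A B) \<le> real (a * b) * frob_norm (blockdiag A B)"
proof -
  have U': "swap_parties a b U \<in> carrier_mat (b * a) (b * a)"
    "form_bounded (b * a) (b * a) (swap_parties a b U) 1"
    using form_bounded_swap_parties[OF U(2)] by (simp_all add: swap_parties_def)
  have "(frob_norm (game_operator a b U A B))\<^sup>2 =
      (frob_norm (marginal_payoff a b U B))\<^sup>2 + (frob_norm (marginal_payoff b a (swap_parties a b U) A))\<^sup>2"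
    unfolding game_operator_def
    by (simp add: frob_norm_blockdiag[OF marginal_payoff_carrier uminus_carrier_mat[OF marginal_payoff_carrier]]
        frob_norm_uminus)
  also have "\<dots> \<le> (real (a * b) * frob_norm B)\<^sup>2 + (real (a * b) * frob_norm A)\<^sup>2"
    using marginal_payoff_frob_norm_le[OF U B] marginal_payoff_frob_norm_le[OF U' A]
    by (intro add_mono power_mono) (simp_all add: frob_norm_nonneg mult.commute)
  also have "\<dots> = (real (a * b) * frob_norm (blockdiag A B))\<^sup>2"
    by (simp add: frob_norm_blockdiag[OF A B] algebra_simps)
  finally show ?thesis
    by (rule power2_le_imp_le) (simp add: frob_norm_nonneg)
qed

lemma game_operator_op_norm_le:
  assumes U: "U \<in> carrier_mat (a * b) (a * b)" "form_bounded (a * b) (a * b) U 1"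
    and A: "hermitian a A" and B: "hermitian b B"
  shows "op_norm (game_operator a b U A B) \<le> 2 * trace_norm (blockdiag A B)"
proof -
  have Ac: "A \<in> carrier_mat a a" and Bc: "B \<in> carrier_mat b b"
    using A B by (simp_all add: hermitian_def)
  have U': "swap_parties a b U \<in> carrier_mat (b * a) (b * a)"
    "form_bounded (b * a) (b * a) (swap_parties a b U) 1"
    using form_bounded_swap_parties[OF U(2)] by (simp_all add: swap_parties_def)
  obtain w lam where O: "orthonormal (a + b) (a + b) w"
    and dec: "\<And>i j. i < a + b \<Longrightarrow> j < a + b \<Longrightarrow>
      blockdiag A B $$ (i, j) = (\<Sum>r<a + b. of_real (lam r) * (w r i * cnj (w r j)))"
    using hermitian_spectral_decomposition[OF hermitian_blockdiag[OF A B]] by blast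
  define T where "T = (\<Sum>r<a + b. cmod (complex_of_real (lam r)))"
  have "T = trace_norm (blockdiag A B)"
    unfolding T_def using trace_norm_spectral[OF hermitian_blockdiag[OF A B] O dec] by simp
  have w: "sq_norm a (w r) \<le> 1" "sq_norm b (\<lambda>s. w r (a + s)) \<le> 1" if "r < a + b" for r
    using orthonormal_sq_norm[OF O that] sq_norm_add_dim[of a b "w r"] sq_norm_nonneg[of a "w r"]
      sq_norm_nonneg[of b "\<lambda>s. w r (a + s)"] by linarith+
  have "form_bounded a a (marginal_payoff a b U B) T"
    unfolding T_def using w
    by (intro marginal_payoff_form_bounded[OF U Bc, where w = "\<lambda>r s. w r (a + s)"])
      (auto simp: dec[of "a + _" "a + _", symmetric] index_blockdiag[OF Ac Bc])
  moreover have "form_bounded b b (- marginal_payoff b a (swap_parties a b U) A) T"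
    unfolding T_def using w
    by (intro form_bounded_uminus marginal_payoff_carrier marginal_payoff_form_bounded[OF U' Ac, where w = w])
      (auto simp: dec[symmetric] index_blockdiag[OF Ac Bc])
  ultimately have "form_bounded (a + b) (a + b) (game_operator a b U A B) (2 * T)"
    unfolding game_operator_def
    by (intro form_bounded_blockdiag marginal_payoff_carrier uminus_carrier_mat) (simp_all add: T_def sum_nonneg)
  then have "op_norm (game_operator a b U A B) \<le> 2 * T"
    by (intro op_norm_le_of_form_bounded[where r = "a + b" and c = "a + b"])
      (simp_all add: game_operator_def blockdiag_carrier marginal_payoff_carrier T_def sum_nonneg)
  then show ?thesis using \<open>T = trace_norm (blockdiag A B)\<close> by simp
qed

lemma game_F_diff:
  assumes U: "U \<in> carrier_mat (2 ^ n * 2 ^ m) (2 ^ n * 2 ^ m)"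
    and A: "A \<in> carrier_mat (2 ^ n) (2 ^ n)" "A' \<in> carrier_mat (2 ^ n) (2 ^ n)"
    and B: "B \<in> carrier_mat (2 ^ m) (2 ^ m)" "B' \<in> carrier_mat (2 ^ m) (2 ^ m)"
  shows "blockdiag (fst (game_F n m U A B) - fst (game_F n m U A' B'))
      (snd (game_F n m U A B) - snd (game_F n m U A' B')) = game_operator (2 ^ n) (2 ^ m) U (A - A') (B - B')"
proof -
  let ?U' = "swap_parties (2 ^ n) (2 ^ m) U"
  have U': "?U' \<in> carrier_mat (2 ^ m * 2 ^ n) (2 ^ m * 2 ^ n)" by (simp add: swap_parties_def)
  have "snd (game_F n m U A B) - snd (game_F n m U A' B') =
      - marginal_payoff (2 ^ m) (2 ^ n) ?U' A - - marginal_payoff (2 ^ m) (2 ^ n) ?U' A'"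
    by (simp add: game_F_def ptrace_A_eq_marginal_payoff_swap_parties[OF U A(1)]
        ptrace_A_eq_marginal_payoff_swap_parties[OF U A(2)])
  also have "\<dots> = - (marginal_payoff (2 ^ m) (2 ^ n) ?U' A - marginal_payoff (2 ^ m) (2 ^ n) ?U' A')"
    by (intro eq_matI) simp_all
  also have "\<dots> = - marginal_payoff (2 ^ m) (2 ^ n) ?U' (A - A')"
    by (simp add: marginal_payoff_diff[OF U' A])
  finally show ?thesis
    by (simp add: game_operator_def game_F_def marginal_payoff_def[symmetric] marginal_payoff_diff[OF U B])
qed

lemma game_F_lipschitz:
  assumes P: "povm (2 ^ (n + m)) Omega P" and u: "\<forall>w\<in>Omega. \<bar>u w\<bar> \<le> 1"
    and dens: "density (2 ^ n) \<alpha>" "density (2 ^ m) \<beta>" "density (2 ^ n) \<alpha>'" "density (2 ^ m) \<beta>'"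
  defines "U \<equiv> payoff_obs (2 ^ (n + m)) Omega P u"
  defines "FZ \<equiv> game_F n m U \<alpha> \<beta>" and "FZ' \<equiv> game_F n m U \<alpha>' \<beta>'"
  shows "frob_norm (blockdiag (fst FZ - fst FZ') (snd FZ - snd FZ'))
      \<le> 2 ^ (n + m) * frob_norm (blockdiag (\<alpha> - \<alpha>') (\<beta> - \<beta>'))"
    and "op_norm (blockdiag (fst FZ - fst FZ') (snd FZ - snd FZ'))
      \<le> 2 * trace_norm (blockdiag (\<alpha> - \<alpha>') (\<beta> - \<beta>'))"
proof -
  have N: "(2::nat) ^ (n + m) = 2 ^ n * 2 ^ m" by (simp add: power_add)
  have Uc: "U \<in> carrier_mat (2 ^ n * 2 ^ m) (2 ^ n * 2 ^ m)"
    and Ub: "form_bounded (2 ^ n * 2 ^ m) (2 ^ n * 2 ^ m) U 1"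
    unfolding U_def N using payoff_obs_form_bounded[OF P[unfolded N] u] by (simp_all add: payoff_obs_def)
  have H\<alpha>: "hermitian (2 ^ n) (\<alpha> - \<alpha>')" and H\<beta>: "hermitian (2 ^ m) (\<beta> - \<beta>')"
    using dens by (simp_all add: density_hermitian hermitian_minus)
  have eq: "blockdiag (fst FZ - fst FZ') (snd FZ - snd FZ') = game_operator (2 ^ n) (2 ^ m) U (\<alpha> - \<alpha>') (\<beta> - \<beta>')"
    unfolding FZ_def FZ'_def using dens density_hermitian
    by (intro game_F_diff[OF Uc]) (simp_all add: hermitian_def)
  show "frob_norm (blockdiag (fst FZ - fst FZ') (snd FZ - snd FZ'))
      \<le> 2 ^ (n + m) * frob_norm (blockdiag (\<alpha> - \<alpha>') (\<beta> - \<beta>'))"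
    unfolding eq using game_operator_frob_norm_le[OF Uc Ub] H\<alpha> H\<beta>
    by (simp add: hermitian_def power_add)
  show "op_norm (blockdiag (fst FZ - fst FZ') (snd FZ - snd FZ'))
      \<le> 2 * trace_norm (blockdiag (\<alpha> - \<alpha>') (\<beta> - \<beta>'))"
    unfolding eq by (rule game_operator_op_norm_le[OF Uc Ub H\<alpha> H\<beta>])
qed

theorem mainTheorem5:
  shows
  "(\<exists>C::real. \<forall>(n::nat) (m::nat) (Omega::nat set) (P::nat \<Rightarrow> complex mat) (u::nat \<Rightarrow> real)
        \<alpha> \<beta> \<alpha>' \<beta>'.
      povm (2^(n+m)) Omega P \<longrightarrow> (\<forall>w\<in>Omega. \<bar>u w\<bar> \<le> 1) \<longrightarrow>
      density (2^n) \<alpha> \<longrightarrow> density (2^m) \<beta> \<longrightarrow>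
      density (2^n) \<alpha>' \<longrightarrow> density (2^m) \<beta>' \<longrightarrow>
      (let U = payoff_obs (2^(n+m)) Omega P u;
           FZ = game_F n m U \<alpha> \<beta>; FZ' = game_F n m U \<alpha>' \<beta>'
       in frob_norm (blockdiag (fst FZ - fst FZ') (snd FZ - snd FZ'))
            \<le> C * 2^(n+m) * frob_norm (blockdiag (\<alpha> - \<alpha>') (\<beta> - \<beta>'))))
 \<and> (\<exists>C::real. \<forall>(n::nat) (m::nat) (Omega::nat set) (P::nat \<Rightarrow> complex mat) (u::nat \<Rightarrow> real)
        \<alpha> \<beta> \<alpha>' \<beta>'.
      povm (2^(n+m)) Omega P \<longrightarrow> (\<forall>w\<in>Omega. \<bar>u w\<bar> \<le> 1) \<longrightarrow>
      density (2^n) \<alpha> \<longrightarrow> density (2^m) \<beta> \<longrightarrow>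
      density (2^n) \<alpha>' \<longrightarrow> density (2^m) \<beta>' \<longrightarrow>
      (let U = payoff_obs (2^(n+m)) Omega P u;
           FZ = game_F n m U \<alpha> \<beta>; FZ' = game_F n m U \<alpha>' \<beta>'
       in op_norm (blockdiag (fst FZ - fst FZ') (snd FZ - snd FZ'))
            \<le> C * trace_norm (blockdiag (\<alpha> - \<alpha>') (\<beta> - \<beta>'))))"
  by (intro conjI[OF exI[of _ 1] exI[of _ 2]] allI impI) (simp_all add: Let_def game_F_lipschitz)

end
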